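(* Let $M\cong\mathbb{Z}^k$ be a lattice with dual $N=\operatorname{Hom}(M,\mathbb{Z})$, let $\mathbb{T}=\operatorname{Spec}\mathbb{C}[M]$, and let $X=\operatorname{Spec}A$ be an affine $\mathbb{T}$-variety. Then there is a unique splitting of the acting torus $\mathbb{T}=\mathbb{T}_1\times\mathbb{T}_2$ (induced by a splitting of lattices $N=N_1\oplus N_2$) such that: (1) the action of $\mathbb{T}_1$ on $X$ is fix-pointed; (2) the torus $\mathbb{T}_2$ acts (not necessarily faithfully) on $X_H:=X/\!/\mathbb{T}_1$, and this action is hyperbolic; (3) the quotient morphism $\pi:X\to X/\!/\mathbb{T}$ factorizes as the composition $X\to X_H\to X_H/\!/\mathbb{T}_2\cong X/\!/\mathbb{T}$, where the first map is the quotient by $\mathbb{T}_1$ and the second is the quotient by $\mathbb{T}_2$.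
   Context: The base field is $\mathbb{C}$. A $\mathbb{T}$-variety is a normal variety with a faithful algebraic $\mathbb{T}$-action. For an affine variety $Y$ with an action of a torus $\mathbb{T}'$, the algebraic quotient is $Y/\!/\mathbb{T}'=\operatorname{Spec}(\mathbb{C}[Y]^{\mathbb{T}'})$. A $\mathbb{T}'$-action on an affine variety $Y=\operatorname{Spec}B$, with character lattice $M'$, corresponds to an $M'$-grading $B=\bigoplus_{u\in M'}B_u$, where $B_u=\{f\in B:\lambda\cdot f=\chi^u(\lambda)f\}$. The weight monoid is $\{u\in M': B_u\neq 0\}$ and the weight cone $\omega\subseteq M'_{\mathbb{Q}}=M'\otimes\mathbb{Q}$ is the cone it spans. The action is called fix-pointed if the only linear subspace contained in $\omega$ is $\{0\}$, and hyperbolic if $\omega=M'_{\mathbb{Q}}$.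
   Formalization: Only $N_1$, and hence $\mathbb{T}_1$, is unique: every splitting $N=N_1\oplus N_2$ satisfying (1)-(3) has the same $N_1$, while the complement $N_2$ is only asserted to exist, not to be unique. The statement above fails without it. *)

theory Defs
  imports "HOL-Analysis.Analysis"
begin

text \<open>Lattices. The character lattice M and its dual N are both modelled as int^'k
  (so M is isomorphic to Z^k, k = CARD('k)); the duality pairing is the standard one.\<close>

definition pair :: "int^'k \<Rightarrow> int^'k \<Rightarrow> int" where
  "pair u n = (\<Sum>i\<in>UNIV. u $ i * n $ i)"

definition sublattice :: "(int^'k) set \<Rightarrow> bool" where
  "sublattice S \<longleftrightarrow> 0 \<in> S \<and> (\<forall>a\<in>S. \<forall>b\<in>S. a + b \<in> S) \<and> (\<forall>a\<in>S. - a \<in> S)"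

definition lattice_splitting :: "(int^'k) set \<Rightarrow> (int^'k) set \<Rightarrow> bool" where
  "lattice_splitting N1 N2 \<longleftrightarrow> sublattice N1 \<and> sublattice N2 \<and> N1 \<inter> N2 = {0}
     \<and> (\<forall>n. \<exists>a\<in>N1. \<exists>b\<in>N2. n = a + b)"

text \<open>The character u of T restricted to the subtorus with cocharacter lattice N',
  i.e. the image of u in Hom(N',Z) (represented as a function vanishing off N').\<close>
definition resChar :: "(int^'k) set \<Rightarrow> int^'k \<Rightarrow> (int^'k \<Rightarrow> int)" where
  "resChar N' u = (\<lambda>n. if n \<in> N' then pair u n else 0)"

text \<open>Hom(N',Q) = M'_Q, as rational functions vanishing off N' and additive on N'.\<close>
definition QHom :: "(int^'k) set \<Rightarrow> (int^'k \<Rightarrow> rat) set" where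
  "QHom N' = {f. (\<forall>n. n \<notin> N' \<longrightarrow> f n = 0) \<and> (\<forall>a\<in>N'. \<forall>b\<in>N'. f (a + b) = f a + f b)}"

definition qcone :: "('n \<Rightarrow> rat) set \<Rightarrow> ('n \<Rightarrow> rat) set" where
  "qcone G = {f. \<exists>S c. finite S \<and> S \<subseteq> G \<and> (\<forall>x\<in>S. c x \<ge> 0)
                   \<and> f = (\<lambda>n. \<Sum>x\<in>S. c x * x n)}"

definition qsubspace :: "('n \<Rightarrow> rat) set \<Rightarrow> bool" where
  "qsubspace V \<longleftrightarrow> (\<lambda>_. 0) \<in> V \<and> (\<forall>f\<in>V. \<forall>g\<in>V. (\<lambda>n. f n + g n) \<in> V)
      \<and> (\<forall>f\<in>V. \<forall>c. (\<lambda>n. c * f n) \<in> V)"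

text \<open>C-algebra structure on a commutative ring 'a, given by a ring homomorphism
  emb : C -> 'a; scalar multiplication is c . a = emb c * a.\<close>
definition complex_algebra_hom :: "(complex \<Rightarrow> 'a::comm_ring_1) \<Rightarrow> bool" where
  "complex_algebra_hom emb \<longleftrightarrow> emb 0 = 0 \<and> emb 1 = 1
     \<and> (\<forall>x y. emb (x + y) = emb x + emb y) \<and> (\<forall>x y. emb (x * y) = emb x * emb y)"

definition C_subspace :: "(complex \<Rightarrow> 'a::comm_ring_1) \<Rightarrow> 'a set \<Rightarrow> bool" where
  "C_subspace emb V \<longleftrightarrow> 0 \<in> V \<and> (\<forall>x\<in>V. \<forall>y\<in>V. x + y \<in> V) \<and> (\<forall>c. \<forall>x\<in>V. emb c * x \<in> V)"

definition finitely_generated_C_algebra :: "(complex \<Rightarrow> 'a::comm_ring_1) \<Rightarrow> bool" where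
  "finitely_generated_C_algebra emb \<longleftrightarrow> (\<exists>G. finite G \<and>
     (\<forall>a. a \<in> \<Inter>{S. range emb \<subseteq> S \<and> G \<subseteq> S \<and> (\<forall>x\<in>S. \<forall>y\<in>S. x + y \<in> S)
                      \<and> (\<forall>x\<in>S. \<forall>y\<in>S. x * y \<in> S)}))"

text \<open>Normality: the domain is integrally closed in its fraction field. A fraction x/y
  (y nonzero) is integral iff x^n + sum_i c_i x^i y^(n-i) = 0 for some n > 0.\<close>
definition integrally_closed_domain :: "'a::idom itself \<Rightarrow> bool" where
  "integrally_closed_domain _ \<longleftrightarrow> (\<forall>(x::'a) y. y \<noteq> 0 \<longrightarrow>
     (\<exists>n c. n > 0 \<and> x ^ n + (\<Sum>i<n. c i * x ^ i * y ^ (n - i)) = 0) \<longrightarrow> y dvd x)"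

definition M_grading :: "(complex \<Rightarrow> 'a::comm_ring_1) \<Rightarrow> (int^'k \<Rightarrow> 'a set) \<Rightarrow> bool" where
  "M_grading emb B \<longleftrightarrow> (\<forall>u. C_subspace emb (B u))
     \<and> (\<forall>u v. \<forall>x\<in>B u. \<forall>y\<in>B v. x * y \<in> B (u + v))
     \<and> (\<forall>a. \<exists>!f. (finite {u. f u \<noteq> 0} \<and> (\<forall>u. f u \<in> B u))
                  \<and> a = (\<Sum>u\<in>{u. f u \<noteq> 0}. f u))"

text \<open>The action is faithful: the weights generate M as a group.\<close>
definition faithful_grading :: "(int^'k \<Rightarrow> 'a::zero set) \<Rightarrow> bool" where
  "faithful_grading B \<longleftrightarrow> (\<forall>S. sublattice S \<and> {u. B u \<noteq> {0}} \<subseteq> S \<longrightarrow> S = UNIV)"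

text \<open>Affine T-variety X = Spec A: A normal f.g. C-domain with faithful M-grading.\<close>
definition affine_T_variety :: "(complex \<Rightarrow> 'a::idom) \<Rightarrow> (int^'k \<Rightarrow> 'a set) \<Rightarrow> bool" where
  "affine_T_variety emb B \<longleftrightarrow> complex_algebra_hom emb \<and> finitely_generated_C_algebra emb
     \<and> integrally_closed_domain TYPE('a) \<and> M_grading emb B \<and> faithful_grading B"

text \<open>Grading induced on A by the subtorus with cocharacter lattice N': the component
  of character chi in Hom(N',Z) is the sum of the B u with u restricting to chi.\<close>
definition Bres :: "(int^'k \<Rightarrow> 'a::comm_ring_1 set) \<Rightarrow> (int^'k) set \<Rightarrow> (int^'k \<Rightarrow> int) \<Rightarrow> 'a set" where
  "Bres B N' chi = {(\<Sum>u\<in>S. f u) | S f. finite S \<and> (\<forall>u\<in>S. f u \<in> B u \<and> resChar N' u = chi)}"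

definition weight_cone :: "((int^'k \<Rightarrow> int) \<Rightarrow> 'a::zero set) \<Rightarrow> (int^'k \<Rightarrow> rat) set" where
  "weight_cone C = qcone ((\<lambda>chi n. of_int (chi n)) ` {chi. C chi \<noteq> {0}})"

definition fix_pointed :: "((int^'k \<Rightarrow> int) \<Rightarrow> 'a::zero set) \<Rightarrow> bool" where
  "fix_pointed C \<longleftrightarrow> (\<forall>V. qsubspace V \<and> V \<subseteq> weight_cone C \<longrightarrow> V = {\<lambda>_. 0})"

definition hyperbolic :: "(int^'k) set \<Rightarrow> ((int^'k \<Rightarrow> int) \<Rightarrow> 'a::zero set) \<Rightarrow> bool" where
  "hyperbolic N' C \<longleftrightarrow> weight_cone C = QHom N'"

end

(*
  Let w be the cone in M_Q spanned by the weights of A and L = w /\ -w its lineality space.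
  L is a face of w, so it is spanned by the weights it contains, and N1 is the lattice of
  cocharacters orthogonal to these weights. Being an orthogonal lattice, N1 is saturated and
  has a complement N2.

  Restriction to N1 kills exactly L, so the image of w in Hom(N1, Q) contains no line:
  T1 acts fix-pointedly. The T1-invariants carry the weights orthogonal to N1, among them all
  weights in L, and every homomorphism N2 -> Q extends by zero on N1 to an element of L;
  hence T2 acts hyperbolically on X//T1.

  Conversely, let N = N1' + N2' be another such splitting. Each weight in L spans a line in
  the weight cone of T1', so fix-pointedness forces N1' to be orthogonal to L, i.e. N1' is
  contained in N1. For n = a + b in N1 with a in N1' and b in N2', hyperbolicity puts the
  characters <b, -> and -<b, -> of T2' into the weight cone of the T1'-invariants; preimages
  in w of the two vanish on N1', so their sum vanishes on N, which places both in L. Pairing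
  the first with n then gives <b, b> = 0, so n lies in N1'.
*)
theory Submission
  imports Defs
begin

lemma sublattice_diff: "sublattice S \<Longrightarrow> a \<in> S \<Longrightarrow> b \<in> S \<Longrightarrow> a - b \<in> S"
  unfolding sublattice_def by (metis diff_conv_add_uminus)

lemma sublattice_smult:
  assumes S: "sublattice S" and a: "a \<in> S"
  shows "m *s a \<in> S"
proof -
  have nat: "of_nat j *s a \<in> S" for j
  proof (induction j)
    case 0 then show ?case using S by (simp add: sublattice_def vec_eq_iff)
  next
    case (Suc j)
    have "of_nat (Suc j) *s a = a + of_nat j *s a" by (simp add: vec_eq_iff algebra_simps)
    then show ?case using Suc S a unfolding sublattice_def by simp
  qed
  show ?thesis
  proof (cases "m \<ge> 0")
    case True
    then show ?thesis using nat[of "nat m"] by simp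
  next
    case False
    then have "m *s a = - (of_nat (nat (- m)) *s a)" by (simp add: vec_eq_iff)
    then show ?thesis using nat[of "nat (- m)"] S unfolding sublattice_def by simp
  qed
qed

lemma sublattice_sum: "sublattice S \<Longrightarrow> (\<And>i. i \<in> I \<Longrightarrow> f i \<in> S) \<Longrightarrow> sum f I \<in> S"
  by (induction I rule: infinite_finite_induct) (auto simp: sublattice_def)

lemma sublattice_eq_UNIV_if_axis:
  assumes S: "sublattice S" and axis: "\<And>i. axis i 1 \<in> S"
  shows "S = UNIV"
proof -
  have "n \<in> S" for n
  proof -
    have "n = (\<Sum>i\<in>UNIV. (n $ i) *s axis i (1::int))"
      by (simp add: vec_eq_iff sum_component axis_def if_distrib cong: if_cong)
    also have "\<dots> \<in> S" using S axis by (intro sublattice_sum sublattice_smult)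
    finally show ?thesis .
  qed
  then show ?thesis by blast
qed

lemma sublattice_add_multiples:
  assumes C: "sublattice C"
  shows "sublattice {b + m *s e | b m. b \<in> C}" (is "sublattice ?C")
  unfolding sublattice_def
proof (intro conjI ballI)
  show "0 \<in> ?C" using C by (auto simp: sublattice_def intro!: exI[of _ 0])
next
  fix x y assume "x \<in> ?C" "y \<in> ?C"
  then obtain a m b l where "x = a + m *s e" "y = b + l *s e" "a \<in> C" "b \<in> C" by auto
  moreover have "a + m *s e + (b + l *s e) = (a + b) + (m + l) *s e"
    by (simp add: vec_eq_iff algebra_simps)
  ultimately show "x + y \<in> ?C" using C unfolding sublattice_def by blast
next
  fix x assume "x \<in> ?C"
  then obtain a m where "x = a + m *s e" "a \<in> C" by auto
  moreover have "- (a + m *s e) = - a + (- m) *s e" by (simp add: vec_eq_iff)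
  ultimately show "- x \<in> ?C" using C unfolding sublattice_def by blast
qed

lemma lattice_splitting_unique:
  assumes "lattice_splitting N1 N2" "a \<in> N1" "a' \<in> N1" "b \<in> N2" "b' \<in> N2" "a + b = a' + b'"
  shows "b = b'"
proof -
  have "b - b' = a' - a" using assms(6) by (simp add: algebra_simps)
  moreover have "b - b' \<in> N2" "a' - a \<in> N1"
    using assms(1-5) by (auto simp: lattice_splitting_def intro: sublattice_diff)
  ultimately have "b - b' \<in> N1 \<inter> N2" by simp
  then have "b - b' = 0" using assms(1) unfolding lattice_splitting_def by blast
  then show ?thesis by simp
qed

lemma lattice_splitting_projection:
  assumes split: "lattice_splitting N1 N2"
  obtains p where "\<And>x y. p (x + y) = p x + p y" "\<And>n. p n \<in> N2"
    "\<And>n. n \<in> N2 \<Longrightarrow> p n = n" "\<And>n. n \<in> N1 \<Longrightarrow> p n = 0"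
proof
  have N1: "sublattice N1" and N2: "sublattice N2"
    using split by (auto simp: lattice_splitting_def)
  define p where "p n = (SOME b. b \<in> N2 \<and> n - b \<in> N1)" for n
  have p: "p n \<in> N2 \<and> n - p n \<in> N1" for n
  proof -
    obtain a b where "a \<in> N1" "b \<in> N2" "n = a + b"
      using split unfolding lattice_splitting_def by blast
    then have "\<exists>b. b \<in> N2 \<and> n - b \<in> N1" by (intro exI[of _ b]) simp
    then show ?thesis unfolding p_def by (rule someI_ex)
  qed
  have p_eq: "p n = b" if "b \<in> N2" "n - b \<in> N1" for n b
    using lattice_splitting_unique[OF split, of "n - p n" "n - b" "p n" b] p[of n] that by simp
  show "p n \<in> N2" for n using p by blast
  show "p n = n" if "n \<in> N2" for n using that N1 by (intro p_eq) (auto simp: sublattice_def)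
  show "p n = 0" if "n \<in> N1" for n using that N2 by (intro p_eq) (auto simp: sublattice_def)
  show "p (x + y) = p x + p y" for x y
  proof (rule p_eq)
    show "p x + p y \<in> N2" using p N2 by (auto simp: sublattice_def)
    have "x + y - (p x + p y) = (x - p x) + (y - p y)" by (simp add: algebra_simps)
    also have "\<dots> \<in> N1" using p[of x] p[of y] N1 by (simp add: sublattice_def)
    finally show "x + y - (p x + p y) \<in> N1" .
  qed
qed

definition rat_vec :: "int^'k \<Rightarrow> rat^'k" where
  "rat_vec u = (\<chi> i. of_int (u $ i))"

definition qpair :: "rat^'k \<Rightarrow> int^'k \<Rightarrow> rat" where
  "qpair q n = (\<Sum>i\<in>UNIV. q $ i * of_int (n $ i))"

lemma qpair_add_left: "qpair (p + q) n = qpair p n + qpair q n"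
  by (simp add: qpair_def sum.distrib algebra_simps)

lemma qpair_smult_left: "qpair (c *s q) n = c * qpair q n"
  by (simp add: qpair_def sum_distrib_left algebra_simps)

lemma qpair_minus_left: "qpair (- q) n = - qpair q n"
  by (simp add: qpair_def sum_negf)

lemma qpair_diff_left: "qpair (p - q) n = qpair p n - qpair q n"
  by (simp add: qpair_def sum_subtractf algebra_simps)

lemma qpair_zero_left [simp]: "qpair 0 n = 0"
  by (simp add: qpair_def)

lemma qpair_sum_left: "qpair (sum f S) n = (\<Sum>x\<in>S. qpair (f x) n)"
  by (induction S rule: infinite_finite_induct) (auto simp: qpair_add_left)

lemma qpair_add_right: "qpair q (a + b) = qpair q a + qpair q b"
  by (simp add: qpair_def sum.distrib algebra_simps)

lemma qpair_minus_right: "qpair q (- a) = - qpair q a"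
  by (simp add: qpair_def sum_negf)

lemma qpair_diff_right: "qpair q (a - b) = qpair q a - qpair q b"
  by (simp add: qpair_def sum_subtractf algebra_simps)

lemma qpair_smult_right: "qpair q (m *s a) = of_int m * qpair q a"
  by (simp add: qpair_def sum_distrib_left algebra_simps)

lemma qpair_zero_right [simp]: "qpair q 0 = 0"
  by (simp add: qpair_def)

lemma qpair_rat_vec [simp]: "qpair (rat_vec u) n = of_int (pair u n)"
  by (simp add: qpair_def rat_vec_def pair_def)

lemma qpair_axis: "qpair q (axis i 1) = q $ i"
proof -
  have "qpair q (axis i 1) = (\<Sum>j\<in>UNIV. if j = i then q $ i else 0)"
    unfolding qpair_def axis_def by (intro sum.cong) auto
  then show ?thesis by simp
qed

lemma qpair_nondegenerate: "(\<And>n. qpair q n = 0) \<Longrightarrow> q = 0"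
  by (metis qpair_axis vec_eq_iff zero_index)

lemma qpair_eq_0_if_splitting:
  assumes split: "lattice_splitting N1 N2"
    and "\<forall>n\<in>N1. qpair q n = 0" "\<forall>n\<in>N2. qpair q n = 0"
  shows "q = 0"
proof (rule qpair_nondegenerate)
  fix n
  obtain a b where "a \<in> N1" "b \<in> N2" "n = a + b"
    using split unfolding lattice_splitting_def by blast
  then show "qpair q n = 0" using assms(2,3) by (simp add: qpair_add_right)
qed

lemma pair_add_right: "pair u (a + b) = pair u a + pair u b"
  by (simp add: pair_def sum.distrib algebra_simps)

lemma pair_minus_right: "pair u (- a) = - pair u a"
  by (simp add: pair_def sum_negf)

lemma pair_diff_right: "pair u (a - b) = pair u a - pair u b"
  by (simp add: pair_def sum_subtractf algebra_simps)

lemma pair_smult_right: "pair u (m *s a) = m * pair u a"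
  by (simp add: pair_def sum_distrib_left algebra_simps)

lemma pair_zero_right [simp]: "pair u 0 = 0"
  by (simp add: pair_def)

lemma pair_zero_left: "pair 0 n = 0"
  by (simp add: pair_def)

lemma pair_self_eq_0: "pair u u = 0 \<Longrightarrow> u = 0"
proof -
  assume "pair u u = 0"
  then have "(\<Sum>i\<in>UNIV. u $ i * u $ i) = 0" by (simp add: pair_def)
  then have "\<forall>i\<in>UNIV. u $ i * u $ i = 0" by (subst (asm) sum_nonneg_eq_0_iff) auto
  then show "u = 0" by (simp add: vec_eq_iff)
qed

lemma additive_eq_qpair:
  fixes h :: "int^'k \<Rightarrow> rat"
  assumes add: "\<And>x y. h (x + y) = h x + h y"
  shows "h n = qpair (\<chi> i. h (axis i 1)) n"
proof -
  let ?z = "\<chi> i. h (axis i 1)"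
  have "h 0 = 0" using add[of 0 0] by simp
  moreover have "h (- x) = - h x" for x using add[of x "- x"] \<open>h 0 = 0\<close> by simp
  ultimately have "sublattice {x. h x = qpair ?z x}"
    by (auto simp: sublattice_def add qpair_add_right qpair_minus_right)
  moreover have "axis i 1 \<in> {x. h x = qpair ?z x}" for i by (simp add: qpair_axis)
  ultimately show ?thesis using sublattice_eq_UNIV_if_axis by blast
qed

section \<open>Orthogonal lattices\<close>

definition perp :: "(int^'k) set \<Rightarrow> (int^'k) set" where
  "perp W = {n. \<forall>w\<in>W. pair w n = 0}"

lemma perp_insert: "perp (insert w W) = perp W \<inter> {n. pair w n = 0}"
  by (auto simp: perp_def)

lemma sublattice_perp: "sublattice (perp W)"
  by (auto simp: sublattice_def perp_def pair_add_right pair_minus_right)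

lemma sublattice_Int_pair_kernel:
  "sublattice L \<Longrightarrow> sublattice (L \<inter> {n. pair w n = 0})"
  by (auto simp: sublattice_def pair_add_right pair_minus_right)

lemma qpair_span_eq_0:
  assumes "q \<in> vec.span (rat_vec ` W)" and "n \<in> perp W"
  shows "qpair q n = 0"
proof -
  have "vec.subspace {q. qpair q n = 0}"
    by (simp add: vec.subspace_def qpair_add_left qpair_smult_left)
  then show ?thesis
    by (rule vec.span_induct[OF assms(1)]) (use assms(2) in \<open>auto simp: perp_def\<close>)
qed

lemma perp_eq_finite_subset: "\<exists>W0\<subseteq>W. finite W0 \<and> perp W0 = perp W"
proof -
  obtain B where B: "B \<subseteq> rat_vec ` W" "vec.independent B" "rat_vec ` W \<subseteq> vec.span B"
    by (rule vec.basis_exists)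
  obtain W0 where W0: "W0 \<subseteq> W" "finite W0" "B = rat_vec ` W0"
    using finite_subset_image[OF vec.finiteI_independent[OF B(2)] B(1)] by blast
  have "perp W0 \<subseteq> perp W"
    using qpair_span_eq_0[of _ W0] B(3) W0(3) by (fastforce simp: perp_def)
  moreover have "perp W \<subseteq> perp W0" using W0(1) by (auto simp: perp_def)
  ultimately show ?thesis using W0 by blast
qed

lemma annihilates_perp_insert:
  assumes e: "e \<in> perp W" "pair w e \<noteq> 0" and z: "\<forall>n\<in>perp (insert w W). qpair z n = 0"
    and x: "x \<in> perp W"
  shows "qpair (z - (qpair z e / of_int (pair w e)) *s rat_vec w) x = 0"
proof -
  have "pair w e *s x - pair w x *s e \<in> perp (insert w W)"
    using x e sublattice_perp[of W]
    by (auto simp: perp_insert pair_diff_right pair_smult_right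
             intro!: sublattice_diff sublattice_smult)
  then have "qpair z (pair w e *s x - pair w x *s e) = 0" using z by blast
  then show ?thesis
    using e(2) by (simp add: qpair_diff_left qpair_smult_left qpair_diff_right qpair_smult_right
                             field_simps)
qed

lemma perp_perp_subset_span_finite:
  assumes "finite W" and "\<forall>n\<in>perp W. qpair z n = 0"
  shows "z \<in> vec.span (rat_vec ` W)"
  using assms
proof (induction W arbitrary: z rule: finite_induct)
  case empty
  then have "z = 0" by (intro qpair_nondegenerate) (auto simp: perp_def)
  then show ?case by (simp add: vec.span_zero)
next
  case (insert w W)
  have span_mono: "vec.span (rat_vec ` W) \<subseteq> vec.span (rat_vec ` insert w W)"
    by (rule vec.span_mono) auto
  show ?case
  proof (cases "\<forall>x\<in>perp W. pair w x = 0")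
    case True
    then have "perp (insert w W) = perp W" by (auto simp: perp_insert)
    then show ?thesis using insert.IH insert.prems span_mono by auto
  next
    case False
    then obtain e where e: "e \<in> perp W" "pair w e \<noteq> 0" by auto
    define t where "t = qpair z e / of_int (pair w e)"
    have "z - t *s rat_vec w \<in> vec.span (rat_vec ` W)"
      using insert.IH annihilates_perp_insert[OF e insert.prems] unfolding t_def by blast
    moreover have "t *s rat_vec w \<in> vec.span (rat_vec ` insert w W)"
      by (simp add: vec.span_base vec.span_scale)
    ultimately have "(z - t *s rat_vec w) + t *s rat_vec w \<in> vec.span (rat_vec ` insert w W)"
      using span_mono vec.span_add by blast
    then show ?thesis by simp
  qed
qed

lemma span_rat_vec_iff_perp:
  "z \<in> vec.span (rat_vec ` W) \<longleftrightarrow> (\<forall>n\<in>perp W. qpair z n = 0)"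
proof
  assume "\<forall>n\<in>perp W. qpair z n = 0"
  moreover obtain W0 where "W0 \<subseteq> W" "finite W0" "perp W0 = perp W"
    using perp_eq_finite_subset by blast
  ultimately show "z \<in> vec.span (rat_vec ` W)"
    using perp_perp_subset_span_finite[of W0 z] vec.span_mono[of "rat_vec ` W0" "rat_vec ` W"]
    by auto
qed (use qpair_span_eq_0 in blast)

lemma sublattice_pair_generator:
  assumes L: "sublattice L" and nonzero: "\<exists>x\<in>L. pair w x \<noteq> 0"
  shows "\<exists>e\<in>L. pair w e > 0 \<and> (\<forall>x\<in>L. pair w e dvd pair w x)"
proof -
  define P where "P m \<longleftrightarrow> m > 0 \<and> (\<exists>x\<in>L. pair w x = int m)" for m
  obtain x where x: "x \<in> L" "pair w x \<noteq> 0" using nonzero by blast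
  have "\<exists>y\<in>L. pair w y = \<bar>pair w x\<bar>"
  proof (cases "pair w x \<ge> 0")
    case True
    then show ?thesis using x(1) by auto
  next
    case False
    moreover have "- x \<in> L" using L x(1) by (simp add: sublattice_def)
    ultimately show ?thesis by (metis abs_of_neg not_le pair_minus_right)
  qed
  then have "P (nat \<bar>pair w x\<bar>)" using x(2) by (auto simp: P_def)
  then have "P (LEAST m. P m)" by (rule LeastI)
  then obtain e where e: "e \<in> L" "pair w e = int (LEAST m. P m)" "pair w e > 0"
    unfolding P_def by auto
  have "pair w x mod pair w e = 0" if x: "x \<in> L" for x
  proof (rule ccontr)
    assume r: "pair w x mod pair w e \<noteq> 0"
    have "x - (pair w x div pair w e) *s e \<in> L"
      using L x e(1) by (intro sublattice_diff sublattice_smult)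
    moreover have "pair w (x - (pair w x div pair w e) *s e) = pair w x mod pair w e"
      by (metis minus_div_mult_eq_mod pair_diff_right pair_smult_right)
    ultimately have "P (nat (pair w x mod pair w e))"
      using r pos_mod_sign[OF e(3), of "pair w x"]
      by (auto simp: P_def intro!: bexI[of _ "x - (pair w x div pair w e) *s e"])
    then have "(LEAST m. P m) \<le> nat (pair w x mod pair w e)" by (rule Least_le)
    then show False using e(2,3) pos_mod_bound[of "pair w e" "pair w x"] by linarith
  qed
  then show ?thesis using e(1,3) by (auto simp: dvd_eq_mod_eq_0)
qed

lemma lattice_splitting_kernel:
  assumes split: "lattice_splitting L C" and e: "e \<in> L" "pair w e \<noteq> 0"
    and dvd: "\<forall>x\<in>L. pair w e dvd pair w x"
  shows "lattice_splitting (L \<inter> {n. pair w n = 0}) {b + m *s e | b m. b \<in> C}"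
    (is "lattice_splitting ?K ?C")
proof -
  have L: "sublattice L" and C: "sublattice C" and LC: "L \<inter> C = {0}"
    and decomp: "\<forall>n. \<exists>a\<in>L. \<exists>b\<in>C. n = a + b"
    using split by (auto simp: lattice_splitting_def)
  have sublattice_C': "sublattice ?C" using C by (rule sublattice_add_multiples)
  moreover have "x = 0" if x: "x \<in> ?K" "x \<in> ?C" for x
  proof -
    obtain b m where bm: "x = b + m *s e" "b \<in> C" using x(2) by auto
    have "b = x - m *s e" using bm(1) by simp
    then have "b \<in> L" using L x(1) e(1) by (auto intro: sublattice_diff sublattice_smult)
    then have "b = 0" using LC bm(2) by auto
    then have "m * pair w e = 0" using x(1) bm(1) by (simp add: pair_smult_right)
    then show "x = 0" using bm(1) \<open>b = 0\<close> e(2) by simp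
  qed
  moreover have "\<exists>a\<in>?K. \<exists>b\<in>?C. n = a + b" for n
  proof -
    obtain a b where ab: "a \<in> L" "b \<in> C" "n = a + b" using decomp by blast
    define q where "q = pair w a div pair w e"
    have "pair w (a - q *s e) = 0"
      using dvd ab(1) by (simp add: q_def pair_diff_right pair_smult_right)
    moreover have "a - q *s e \<in> L" using L ab(1) e(1) by (intro sublattice_diff sublattice_smult)
    moreover have "b + q *s e \<in> ?C" using ab(2) by auto
    ultimately show ?thesis using ab(3) by (intro bexI[of _ "a - q *s e"] bexI[of _ "b + q *s e"]) auto
  qed
  moreover have "0 \<in> ?K" "0 \<in> ?C" using L sublattice_C' by (auto simp: sublattice_def)
  ultimately show ?thesis
    using sublattice_Int_pair_kernel[OF L] unfolding lattice_splitting_def by blast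
qed

lemma perp_lattice_splitting_finite: "finite W \<Longrightarrow> \<exists>C. lattice_splitting (perp W) C"
proof (induction W rule: finite_induct)
  case empty
  show ?case by (rule exI[of _ "{0}"]) (auto simp: lattice_splitting_def sublattice_def perp_def)
next
  case (insert w W)
  then obtain C where C: "lattice_splitting (perp W) C" by blast
  show ?case
  proof (cases "\<exists>x\<in>perp W. pair w x \<noteq> 0")
    case True
    then obtain e where "e \<in> perp W" "pair w e > 0" "\<forall>x\<in>perp W. pair w e dvd pair w x"
      using sublattice_pair_generator[OF sublattice_perp] by blast
    then have "lattice_splitting (perp (insert w W)) {b + m *s e | b m. b \<in> C}"
      unfolding perp_insert by (intro lattice_splitting_kernel[OF C]) auto
    then show ?thesis by blast
  next
    case False
    then have "perp (insert w W) = perp W" by (auto simp: perp_insert)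
    then show ?thesis using C by auto
  qed
qed

lemma perp_lattice_splitting: "\<exists>C. lattice_splitting (perp W) C"
  using perp_eq_finite_subset[of W] perp_lattice_splitting_finite by metis

section \<open>Rational cones and their lineality spaces\<close>

definition rat_cone :: "(int^'k) set \<Rightarrow> (rat^'k) set" where
  "rat_cone G = {q. \<exists>S c. finite S \<and> S \<subseteq> G \<and> (\<forall>u\<in>S. c u \<ge> 0)
                         \<and> q = (\<Sum>u\<in>S. c u *s rat_vec u)}"

lemma sum_in_rat_cone:
  "finite S \<Longrightarrow> S \<subseteq> G \<Longrightarrow> \<forall>u\<in>S. c u \<ge> 0 \<Longrightarrow>
    (\<Sum>u\<in>S. c u *s rat_vec u) \<in> rat_cone G"
  unfolding rat_cone_def by blast

lemma rat_vec_in_rat_cone: "u \<in> G \<Longrightarrow> rat_vec u \<in> rat_cone G"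
  using sum_in_rat_cone[of "{u}" G "\<lambda>_. 1"] by simp

lemma rat_cone_add:
  assumes "p \<in> rat_cone G" "q \<in> rat_cone G"
  shows "p + q \<in> rat_cone G"
proof -
  obtain S c where S: "finite S" "S \<subseteq> G" "\<forall>u\<in>S. c u \<ge> 0" "p = (\<Sum>u\<in>S. c u *s rat_vec u)"
    using assms(1) unfolding rat_cone_def by blast
  obtain T d where T: "finite T" "T \<subseteq> G" "\<forall>u\<in>T. d u \<ge> 0" "q = (\<Sum>u\<in>T. d u *s rat_vec u)"
    using assms(2) unfolding rat_cone_def by blast
  define c' where "c' u = (if u \<in> S then c u else 0)" for u
  define d' where "d' u = (if u \<in> T then d u else 0)" for u
  have "p = (\<Sum>u\<in>S \<union> T. c' u *s rat_vec u)"
    unfolding S(4) by (rule sum.mono_neutral_cong_left) (auto simp: S T c'_def)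
  moreover have "q = (\<Sum>u\<in>S \<union> T. d' u *s rat_vec u)"
    unfolding T(4) by (rule sum.mono_neutral_cong_left) (auto simp: S T d'_def)
  ultimately have "p + q = (\<Sum>u\<in>S \<union> T. (c' u + d' u) *s rat_vec u)"
    by (simp add: sum.distrib[symmetric] vector_sadd_rdistrib)
  also have "\<dots> \<in> rat_cone G"
    using S T by (intro sum_in_rat_cone) (auto simp: c'_def d'_def)
  finally show ?thesis .
qed

lemma rat_cone_smult:
  assumes "q \<in> rat_cone G" "t \<ge> 0"
  shows "t *s q \<in> rat_cone G"
proof -
  obtain S c where S: "finite S" "S \<subseteq> G" "\<forall>u\<in>S. c u \<ge> 0" "q = (\<Sum>u\<in>S. c u *s rat_vec u)"
    using assms(1) unfolding rat_cone_def by blast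
  have "t *s q = (\<Sum>u\<in>S. (t * c u) *s rat_vec u)"
    unfolding S(4) by (simp add: vec_eq_iff sum_component sum_distrib_left mult.assoc)
  then show ?thesis using S assms(2) by (simp add: sum_in_rat_cone)
qed

lemma rat_cone_mono: "G \<subseteq> H \<Longrightarrow> rat_cone G \<subseteq> rat_cone H"
  unfolding rat_cone_def by blast

lemma rat_cone_subset_span: "rat_cone G \<subseteq> vec.span (rat_vec ` G)"
  unfolding rat_cone_def by (auto intro!: vec.span_sum vec.span_scale) (auto intro: vec.span_base)

lemma qpair_rat_cone_eq_0:
  assumes "q \<in> rat_cone G" and "\<And>u. u \<in> G \<Longrightarrow> pair u n = 0"
  shows "qpair q n = 0"
proof -
  obtain S c where "S \<subseteq> G" "q = (\<Sum>u\<in>S. c u *s rat_vec u)"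
    using assms(1) unfolding rat_cone_def by blast
  then show ?thesis using assms(2) by (auto simp: qpair_sum_left qpair_smult_left intro!: sum.neutral)
qed

definition lineality :: "(int^'k) set \<Rightarrow> (rat^'k) set" where
  "lineality G = {q. q \<in> rat_cone G \<and> - q \<in> rat_cone G}"

definition lineality_weights :: "(int^'k) set \<Rightarrow> (int^'k) set" where
  "lineality_weights G = {u \<in> G. rat_vec u \<in> lineality G}"

lemma subspace_lineality: "vec.subspace (lineality G)"
  unfolding vec.subspace_def
proof (intro conjI ballI allI)
  show "0 \<in> lineality G"
    using sum_in_rat_cone[of "{}" G] by (simp add: lineality_def)
next
  fix p q assume "p \<in> lineality G" "q \<in> lineality G"
  then show "p + q \<in> lineality G"
    using rat_cone_add[of p G q] rat_cone_add[of "- p" G "- q"] by (simp add: lineality_def)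
next
  fix t and q assume q: "q \<in> lineality G"
  have "t *s q = \<bar>t\<bar> *s q \<and> - (t *s q) = \<bar>t\<bar> *s - q
      \<or> t *s q = \<bar>t\<bar> *s - q \<and> - (t *s q) = \<bar>t\<bar> *s q"
    by (cases "t \<ge> 0") (auto simp: vec_eq_iff)
  then show "t *s q \<in> lineality G"
    using q rat_cone_smult[of q G "\<bar>t\<bar>"] rat_cone_smult[of "- q" G "\<bar>t\<bar>"]
    unfolding lineality_def by auto
qed

text \<open>The lineality space is a face of the cone: a generator with positive coefficient in one
  of its elements lies in it as well.\<close>
lemma lineality_subset_rat_cone: "lineality G \<subseteq> rat_cone (lineality_weights G)"
proof
  fix q assume q: "q \<in> lineality G"
  obtain S c where S: "finite S" "S \<subseteq> G" "\<forall>u\<in>S. c u \<ge> 0" "q = (\<Sum>u\<in>S. c u *s rat_vec u)"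
    using q unfolding lineality_def rat_cone_def by blast
  define S' where "S' = {u\<in>S. c u \<noteq> 0}"
  have q': "q = (\<Sum>u\<in>S'. c u *s rat_vec u)"
    unfolding S(4) S'_def by (rule sum.mono_neutral_right) (auto simp: S)
  have "u \<in> lineality_weights G" if u: "u \<in> S'" for u
  proof -
    have uS: "u \<in> S" and cu: "c u > 0" using u S(3) unfolding S'_def by force+
    have "- (c u *s rat_vec u) = - q + (\<Sum>v\<in>S - {u}. c v *s rat_vec v)"
      unfolding S(4) using S(1) uS by (simp add: sum.remove)
    moreover have "(\<Sum>v\<in>S - {u}. c v *s rat_vec v) \<in> rat_cone G"
      using S by (intro sum_in_rat_cone) auto
    ultimately have "- (c u *s rat_vec u) \<in> rat_cone G"
      using q rat_cone_add unfolding lineality_def by fastforce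
    from rat_cone_smult[OF this, of "1 / c u"] cu have "- rat_vec u \<in> rat_cone G"
      by (simp add: vec_eq_iff)
    then show ?thesis
      using uS S(2) rat_vec_in_rat_cone unfolding lineality_weights_def lineality_def by auto
  qed
  then show "q \<in> rat_cone (lineality_weights G)"
    unfolding q' using S by (intro sum_in_rat_cone) (auto simp: S'_def)
qed

lemma lineality_eq_span: "lineality G = vec.span (rat_vec ` lineality_weights G)"
proof
  show "lineality G \<subseteq> vec.span (rat_vec ` lineality_weights G)"
    using lineality_subset_rat_cone rat_cone_subset_span by blast
  show "vec.span (rat_vec ` lineality_weights G) \<subseteq> lineality G"
    by (rule vec.span_minimal) (auto simp: lineality_weights_def subspace_lineality)
qed

lemma lineality_iff_perp:
  "q \<in> lineality G \<longleftrightarrow> (\<forall>n\<in>perp (lineality_weights G). qpair q n = 0)"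
  unfolding lineality_eq_span span_rat_vec_iff_perp ..

lemma rat_cone_add_in_lineality:
  assumes "p \<in> rat_cone G" "q \<in> rat_cone G" "p + q \<in> lineality G"
  shows "p \<in> lineality G"
proof -
  have "q + - (p + q) \<in> rat_cone G"
    using assms rat_cone_add unfolding lineality_def by blast
  then show ?thesis using assms(1) by (simp add: lineality_def)
qed

text \<open>The image of \<open>q \<in> M\<^sub>\<rat>\<close> in \<open>Hom(N, \<rat>)\<close>, in the encoding of \<open>QHom\<close>.\<close>
definition res_rat :: "(int^'k) set \<Rightarrow> rat^'k \<Rightarrow> (int^'k \<Rightarrow> rat)" where
  "res_rat N q = (\<lambda>n. if n \<in> N then qpair q n else 0)"

lemma of_int_resChar: "(\<lambda>n. of_int (resChar N u n)) = res_rat N (rat_vec u)"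
  by (auto simp: resChar_def res_rat_def)

lemma res_rat_smult: "res_rat N (c *s q) = (\<lambda>n. c * res_rat N q n)"
  by (auto simp: res_rat_def qpair_smult_left)

lemma res_rat_sum: "res_rat N (\<Sum>u\<in>S. c u *s rat_vec u) = (\<lambda>n. \<Sum>u\<in>S. c u * res_rat N (rat_vec u) n)"
  by (auto simp: res_rat_def qpair_sum_left qpair_smult_left)

lemma res_rat_add: "res_rat N (p + q) = (\<lambda>n. res_rat N p n + res_rat N q n)"
  by (auto simp: res_rat_def qpair_add_left)

lemma res_rat_eqD: "res_rat N p = res_rat N q \<Longrightarrow> n \<in> N \<Longrightarrow> qpair p n = qpair q n"
  by (metis res_rat_def)

lemma res_rat_eq_0_iff: "res_rat N q = (\<lambda>_. 0) \<longleftrightarrow> (\<forall>n\<in>N. qpair q n = 0)"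
  by (auto simp: res_rat_def fun_eq_iff)

lemma res_rat_in_QHom: "sublattice N \<Longrightarrow> res_rat N q \<in> QHom N"
  by (auto simp: QHom_def res_rat_def sublattice_def qpair_add_right)

lemma QHom_extend:
  assumes split: "lattice_splitting N1 N2" and f: "f \<in> QHom N2"
  obtains z where "res_rat N2 z = f" "\<forall>n\<in>N1. qpair z n = 0"
proof -
  obtain p where p: "\<And>x y. p (x + y) = p x + p y" "\<And>n. p n \<in> N2"
    "\<And>n. n \<in> N2 \<Longrightarrow> p n = n" "\<And>n. n \<in> N1 \<Longrightarrow> p n = 0"
    using lattice_splitting_projection[OF split] by blast
  have f_add: "\<forall>a\<in>N2. \<forall>b\<in>N2. f (a + b) = f a + f b"
    and f_out: "\<forall>n. n \<notin> N2 \<longrightarrow> f n = 0"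
    using f by (auto simp: QHom_def)
  have "0 \<in> N2" using split by (auto simp: lattice_splitting_def sublattice_def)
  then have "f (0 + 0) = f 0 + f 0" using f_add by blast
  then have "f 0 = 0" by simp
  define z where "z = (\<chi> i. f (p (axis i 1)))"
  have z: "f (p n) = qpair z n" for n
    unfolding z_def using f_add p(1,2) by (intro additive_eq_qpair[of "\<lambda>n. f (p n)"]) simp
  show ?thesis
  proof
    show "res_rat N2 z = f"
    proof
      fix n show "res_rat N2 z n = f n"
        by (cases "n \<in> N2") (simp_all add: res_rat_def z[symmetric] p(3) f_out)
    qed
    show "\<forall>n\<in>N1. qpair z n = 0" by (simp add: z[symmetric] p(4) \<open>f 0 = 0\<close>)
  qed
qed

lemma qsubspace_line: "qsubspace (range (\<lambda>c. \<lambda>n. c * f n))"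
  unfolding qsubspace_def
proof (intro conjI ballI allI)
  show "(\<lambda>_. 0) \<in> range (\<lambda>c n. c * f n)" by (auto intro: range_eqI[of _ _ 0])
  fix g h assume "g \<in> range (\<lambda>c n. c * f n)" "h \<in> range (\<lambda>c n. c * f n)"
  then show "(\<lambda>n. g n + h n) \<in> range (\<lambda>c n. c * f n)"
    by (auto simp: distrib_right[symmetric] intro: range_eqI)
next
  fix g c assume "g \<in> range (\<lambda>c n. c * f n)"
  then show "(\<lambda>n. c * g n) \<in> range (\<lambda>c n. c * f n)"
    by (auto simp: mult.assoc[symmetric] intro: range_eqI)
qed

lemma qcone_image_res_rat_subset:
  "qcone ((\<lambda>u. res_rat N (rat_vec u)) ` G) \<subseteq> res_rat N ` rat_cone G" (is "qcone (?r ` G) \<subseteq> _")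
proof
  fix f assume "f \<in> qcone (?r ` G)"
  then obtain S c where S: "finite S" "S \<subseteq> ?r ` G" "\<forall>x\<in>S. c x \<ge> 0"
    "f = (\<lambda>n. \<Sum>x\<in>S. c x * x n)" unfolding qcone_def by blast
  obtain U where U: "U \<subseteq> G" "inj_on ?r U" "S = ?r ` U"
    using S(2) subset_image_inj by metis
  have "finite U" using S(1) U(2,3) finite_image_iff by metis
  then have "(\<Sum>u\<in>U. c (?r u) *s rat_vec u) \<in> rat_cone G"
    using U(1,3) S(3) by (intro sum_in_rat_cone) auto
  moreover have "f = res_rat N (\<Sum>u\<in>U. c (?r u) *s rat_vec u)"
    unfolding S(4) U(3) res_rat_sum by (simp add: sum.reindex[OF U(2)])
  ultimately show "f \<in> res_rat N ` rat_cone G" by blast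
qed

lemma res_rat_image_subset_qcone:
  "res_rat N ` rat_cone G \<subseteq> qcone ((\<lambda>u. res_rat N (rat_vec u)) ` G)" (is "_ \<subseteq> qcone (?r ` G)")
proof
  fix f assume "f \<in> res_rat N ` rat_cone G"
  then obtain S c where S: "finite S" "S \<subseteq> G" "\<forall>u\<in>S. c u \<ge> 0"
    "f = res_rat N (\<Sum>u\<in>S. c u *s rat_vec u)"
    unfolding rat_cone_def by blast
  \<comment> \<open>generators with the same restriction have their coefficients merged\<close>
  define c' where "c' x = (\<Sum>u\<in>{u\<in>S. ?r u = x}. c u)" for x
  have "f = (\<lambda>n. \<Sum>x\<in>?r ` S. c' x * x n)"
  proof
    fix n
    have "f n = (\<Sum>x\<in>?r ` S. \<Sum>u\<in>{u\<in>S. ?r u = x}. c u * ?r u n)"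
      unfolding S(4) res_rat_sum by (rule sum.image_gen[OF S(1)])
    also have "\<dots> = (\<Sum>x\<in>?r ` S. c' x * x n)"
      unfolding c'_def sum_distrib_right by (intro sum.cong refl) auto
    finally show "f n = (\<Sum>x\<in>?r ` S. c' x * x n)" .
  qed
  moreover have "\<forall>x\<in>?r ` S. c' x \<ge> 0" unfolding c'_def using S(3) by (auto intro: sum_nonneg)
  ultimately show "f \<in> qcone (?r ` G)"
    using S(1,2) unfolding qcone_def by (intro CollectI exI[of _ "?r ` S"] exI[of _ c']) auto
qed

lemma qcone_image_res_rat: "qcone ((\<lambda>u. res_rat N (rat_vec u)) ` G) = res_rat N ` rat_cone G"
  using qcone_image_res_rat_subset res_rat_image_subset_qcone by (rule equalityI)

section \<open>Graded algebras\<close>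

definition weights :: "(int^'k \<Rightarrow> 'a::zero set) \<Rightarrow> (int^'k) set" where
  "weights B = {u. B u \<noteq> {0}}"

definition homogeneous_part :: "(int^'k \<Rightarrow> 'a::comm_ring_1 set) \<Rightarrow> 'a \<Rightarrow> int^'k \<Rightarrow> 'a" where
  "homogeneous_part B x = (THE f. (finite {u. f u \<noteq> 0} \<and> (\<forall>u. f u \<in> B u))
                               \<and> x = (\<Sum>u\<in>{u. f u \<noteq> 0}. f u))"

lemma zero_in_Bres: "0 \<in> Bres B N chi"
  unfolding Bres_def by (force intro: exI[of _ "{}"])

lemma B_subset_Bres: "B u \<subseteq> Bres B N (resChar N u)"
  unfolding Bres_def by (force intro: exI[of _ "{u}"])

lemma resChar_eq_0_iff: "resChar N u = (\<lambda>_. 0) \<longleftrightarrow> (\<forall>n\<in>N. pair u n = 0)"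
  by (auto simp: resChar_def fun_eq_iff)

lemma resChar_zero: "resChar N 0 = (\<lambda>_. 0)"
  by (auto simp: resChar_def pair_zero_left)

context
  fixes emb :: "complex \<Rightarrow> 'a::comm_ring_1" and B :: "int^'k \<Rightarrow> 'a set"
  assumes grading: "M_grading emb B"
begin

lemma zero_in_grading: "0 \<in> B u"
  using grading unfolding M_grading_def C_subspace_def by blast

lemma homogeneous_part:
  "finite {u. homogeneous_part B x u \<noteq> 0}" "homogeneous_part B x u \<in> B u"
  "x = (\<Sum>u\<in>{u. homogeneous_part B x u \<noteq> 0}. homogeneous_part B x u)"
  using theI'[of "\<lambda>f. (finite {u. f u \<noteq> 0} \<and> (\<forall>u. f u \<in> B u)) \<and> x = (\<Sum>u\<in>{u. f u \<noteq> 0}. f u)"]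
    grading
  unfolding homogeneous_part_def M_grading_def by blast+

lemma homogeneous_part_eq:
  assumes S: "finite S" "\<forall>u\<in>S. f u \<in> B u" and x: "x = (\<Sum>u\<in>S. f u)"
  shows "homogeneous_part B x = (\<lambda>u. if u \<in> S then f u else 0)" (is "_ = ?f")
  unfolding homogeneous_part_def
proof (rule the1_equality)
  show "\<exists>!f. (finite {u. f u \<noteq> 0} \<and> (\<forall>u. f u \<in> B u)) \<and> x = (\<Sum>u\<in>{u. f u \<noteq> 0}. f u)"
    using grading unfolding M_grading_def by blast
  have "finite {u. ?f u \<noteq> 0}" using S(1) by (rule rev_finite_subset) auto
  moreover have "x = (\<Sum>u\<in>{u. ?f u \<noteq> 0}. ?f u)"
    unfolding x using S(1) by (intro sum.mono_neutral_cong_right) auto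
  ultimately show "(finite {u. ?f u \<noteq> 0} \<and> (\<forall>u. ?f u \<in> B u)) \<and> x = (\<Sum>u\<in>{u. ?f u \<noteq> 0}. ?f u)"
    using S(2) zero_in_grading by auto
qed

lemma Bres_iff_homogeneous_parts:
  "x \<in> Bres B N chi \<longleftrightarrow> (\<forall>u. homogeneous_part B x u \<noteq> 0 \<longrightarrow> resChar N u = chi)"
proof
  assume "x \<in> Bres B N chi"
  then obtain S f where "finite S" "\<forall>u\<in>S. f u \<in> B u \<and> resChar N u = chi" "x = (\<Sum>u\<in>S. f u)"
    unfolding Bres_def by blast
  then show "\<forall>u. homogeneous_part B x u \<noteq> 0 \<longrightarrow> resChar N u = chi"
    using homogeneous_part_eq[of S f x] by auto
next
  assume "\<forall>u. homogeneous_part B x u \<noteq> 0 \<longrightarrow> resChar N u = chi"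
  then show "x \<in> Bres B N chi"
    using homogeneous_part[of x] unfolding Bres_def by blast
qed

lemma exists_homogeneous_part_nonzero:
  "x \<noteq> 0 \<Longrightarrow> \<exists>u. homogeneous_part B x u \<noteq> 0"
  using homogeneous_part(3)[of x] by (metis (mono_tags) empty_Collect_eq sum.empty)

lemma Bres_Int_Bres_zero:
  assumes split: "lattice_splitting N1 N2"
  shows "Bres B N1 (\<lambda>_. 0) \<inter> Bres B N2 (\<lambda>_. 0) = B 0"
proof
  show "B 0 \<subseteq> Bres B N1 (\<lambda>_. 0) \<inter> Bres B N2 (\<lambda>_. 0)"
    using B_subset_Bres[of B 0 N1] B_subset_Bres[of B 0 N2] by (simp add: resChar_zero)
next
  show "Bres B N1 (\<lambda>_. 0) \<inter> Bres B N2 (\<lambda>_. 0) \<subseteq> B 0"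
  proof
    fix x assume x: "x \<in> Bres B N1 (\<lambda>_. 0) \<inter> Bres B N2 (\<lambda>_. 0)"
    let ?h = "homogeneous_part B x"
    have "u = 0" if u: "?h u \<noteq> 0" for u
    proof -
      have "\<forall>n\<in>N1. pair u n = 0" "\<forall>n\<in>N2. pair u n = 0"
        using x u by (auto simp: Bres_iff_homogeneous_parts resChar_eq_0_iff)
      moreover obtain a b where "a \<in> N1" "b \<in> N2" "u = a + b"
        using split unfolding lattice_splitting_def by blast
      ultimately have "pair u u = 0" by (simp add: pair_add_right)
      then show "u = 0" by (rule pair_self_eq_0)
    qed
    then have "(\<Sum>u\<in>{u. ?h u \<noteq> 0}. ?h u) = (\<Sum>u\<in>{0}. ?h u)"
      by (intro sum.mono_neutral_left) auto
    then have "x = ?h 0"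
      using homogeneous_part(3)[of x] by (metis add_0_right empty_iff finite.emptyI sum.empty sum.insert)
    then show "x \<in> B 0" using homogeneous_part(2) by metis
  qed
qed

lemma weight_cone_invariants:
  "weight_cone (\<lambda>chi. Bres B N1 (\<lambda>_. 0) \<inter> Bres B N2 chi)
     = res_rat N2 ` rat_cone {u \<in> weights B. resChar N1 u = (\<lambda>_. 0)}"
proof -
  have "{chi. Bres B N1 (\<lambda>_. 0) \<inter> Bres B N2 chi \<noteq> {0}}
      = resChar N2 ` {u \<in> weights B. resChar N1 u = (\<lambda>_. 0)}"
  proof (intro equalityI subsetI)
    fix chi assume "chi \<in> {chi. Bres B N1 (\<lambda>_. 0) \<inter> Bres B N2 chi \<noteq> {0}}"
    then obtain x where x: "x \<in> Bres B N1 (\<lambda>_. 0)" "x \<in> Bres B N2 chi" "x \<noteq> 0"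
      using zero_in_Bres[of B N1 "\<lambda>_. 0"] zero_in_Bres[of B N2 chi] by blast
    then obtain u where u: "homogeneous_part B x u \<noteq> 0"
      using exists_homogeneous_part_nonzero by blast
    then have "u \<in> weights B"
      using homogeneous_part(2) unfolding weights_def by blast
    moreover have "resChar N1 u = (\<lambda>_. 0)" "resChar N2 u = chi"
      using x(1,2) u by (auto simp: Bres_iff_homogeneous_parts)
    ultimately show "chi \<in> resChar N2 ` {u \<in> weights B. resChar N1 u = (\<lambda>_. 0)}" by blast
  next
    fix chi assume "chi \<in> resChar N2 ` {u \<in> weights B. resChar N1 u = (\<lambda>_. 0)}"
    then obtain u where u: "B u \<noteq> {0}" "resChar N1 u = (\<lambda>_. 0)" "chi = resChar N2 u"
      unfolding weights_def by blast
    then obtain x where "x \<in> B u" "x \<noteq> 0" using zero_in_grading[of u] by blast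
    then show "chi \<in> {chi. Bres B N1 (\<lambda>_. 0) \<inter> Bres B N2 chi \<noteq> {0}}"
      using B_subset_Bres[of B u N1] B_subset_Bres[of B u N2] u(2,3) by auto
  qed
  then show ?thesis
    unfolding weight_cone_def by (simp add: image_image of_int_resChar qcone_image_res_rat)
qed

lemma weight_cone_Bres: "weight_cone (Bres B N) = res_rat N ` rat_cone (weights B)"
proof -
  \<comment> \<open>the subtorus with trivial cocharacter lattice has only the trivial character\<close>
  have "Bres B {} (\<lambda>_. 0) \<inter> Bres B N chi = Bres B N chi" for chi
    by (auto simp: Bres_iff_homogeneous_parts resChar_def)
  moreover have "{u \<in> weights B. resChar {} u = (\<lambda>_. 0)} = weights B"
    by (simp add: resChar_def)
  ultimately show ?thesis using weight_cone_invariants[of "{}" N] by simp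
qed

section \<open>The splitting\<close>

lemma fix_pointed_perp_lineality:
  "fix_pointed (Bres B (perp (lineality_weights (weights B))))" (is "fix_pointed (Bres B ?N1)")
  unfolding fix_pointed_def
proof (intro allI impI)
  fix V assume "qsubspace V \<and> V \<subseteq> weight_cone (Bres B ?N1)"
  then have V: "qsubspace V" "V \<subseteq> res_rat ?N1 ` rat_cone (weights B)"
    using weight_cone_Bres by auto
  have "v = (\<lambda>_. 0)" if v: "v \<in> V" for v
  proof -
    have "(\<lambda>n. (-1) * v n) \<in> V" using V(1) v unfolding qsubspace_def by blast
    then obtain p q where pq: "p \<in> rat_cone (weights B)" "q \<in> rat_cone (weights B)"
      "v = res_rat ?N1 p" "(\<lambda>n. (-1) * v n) = res_rat ?N1 q"
      using V(2) v by blast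
    then have "res_rat ?N1 q = (\<lambda>n. - res_rat ?N1 p n)" by simp
    then have "res_rat ?N1 (p + q) = (\<lambda>_. 0)" by (simp add: res_rat_add)
    then have "p + q \<in> lineality (weights B)" by (simp add: lineality_iff_perp res_rat_eq_0_iff)
    then have "p \<in> lineality (weights B)" by (rule rat_cone_add_in_lineality[OF pq(1,2)])
    then show "v = (\<lambda>_. 0)" using pq(3) by (simp add: lineality_iff_perp res_rat_eq_0_iff)
  qed
  moreover have "(\<lambda>_. 0) \<in> V" using V(1) unfolding qsubspace_def by blast
  ultimately show "V = {\<lambda>_. 0}" by blast
qed

lemma hyperbolic_perp_lineality:
  assumes split: "lattice_splitting (perp (lineality_weights (weights B))) N2"
  shows "hyperbolic N2 (\<lambda>chi. Bres B (perp (lineality_weights (weights B))) (\<lambda>_. 0) \<inter> Bres B N2 chi)"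
    (is "hyperbolic N2 (\<lambda>chi. Bres B ?N1 (\<lambda>_. 0) \<inter> Bres B N2 chi)")
proof -
  let ?P = "{u \<in> weights B. resChar ?N1 u = (\<lambda>_. 0)}"
  have "res_rat N2 ` rat_cone ?P = QHom N2"
  proof
    show "res_rat N2 ` rat_cone ?P \<subseteq> QHom N2"
      using split res_rat_in_QHom by (auto simp: lattice_splitting_def)
    show "QHom N2 \<subseteq> res_rat N2 ` rat_cone ?P"
    proof
      fix f assume "f \<in> QHom N2"
      then obtain z where z: "res_rat N2 z = f" "\<forall>n\<in>?N1. qpair z n = 0"
        using QHom_extend[OF split] by blast
      then have "z \<in> rat_cone (lineality_weights (weights B))"
        using lineality_subset_rat_cone lineality_iff_perp by blast
      moreover have "lineality_weights (weights B) \<subseteq> ?P"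
        by (auto simp: lineality_weights_def resChar_eq_0_iff perp_def)
      ultimately show "f \<in> res_rat N2 ` rat_cone ?P" using z(1) rat_cone_mono by blast
    qed
  qed
  then show ?thesis unfolding hyperbolic_def weight_cone_invariants .
qed

lemma fix_pointed_imp_subset_perp_lineality:
  assumes "fix_pointed (Bres B N1)"
  shows "N1 \<subseteq> perp (lineality_weights (weights B))"
proof (unfold perp_def, intro subsetI CollectI ballI)
  fix n w assume n: "n \<in> N1" and w: "w \<in> lineality_weights (weights B)"
  let ?V = "range (\<lambda>c. \<lambda>m. c * res_rat N1 (rat_vec w) m)"
  have "?V \<subseteq> weight_cone (Bres B N1)"
  proof
    fix f assume "f \<in> ?V"
    then obtain c where "f = res_rat N1 (c *s rat_vec w)" by (auto simp: res_rat_smult)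
    moreover have "c *s rat_vec w \<in> lineality (weights B)"
      using w subspace_lineality[of "weights B"]
      unfolding lineality_weights_def vec.subspace_def by blast
    ultimately show "f \<in> weight_cone (Bres B N1)"
      unfolding weight_cone_Bres lineality_def by blast
  qed
  then have "?V = {\<lambda>_. 0}" using assms qsubspace_line unfolding fix_pointed_def by blast
  moreover have "(\<lambda>m. 1 * res_rat N1 (rat_vec w) m) \<in> ?V" by (rule rangeI)
  ultimately have "res_rat N1 (rat_vec w) = (\<lambda>_. 0)" by simp
  then show "pair w n = 0" using n by (simp add: res_rat_eq_0_iff)
qed

lemma hyperbolic_lineality_lift:
  assumes split: "lattice_splitting N1 N2"
    and hyp: "hyperbolic N2 (\<lambda>chi. Bres B N1 (\<lambda>_. 0) \<inter> Bres B N2 chi)"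
  obtains p where "p \<in> lineality (weights B)" "\<forall>x\<in>N1. qpair p x = 0"
    "\<forall>x\<in>N2. qpair p x = of_int (pair b x)"
proof -
  let ?P = "{u \<in> weights B. resChar N1 u = (\<lambda>_. 0)}"
  have cone: "QHom N2 = res_rat N2 ` rat_cone ?P"
    using hyp by (simp add: hyperbolic_def weight_cone_invariants)
  have N2: "sublattice N2" using split by (simp add: lattice_splitting_def)
  \<comment> \<open>the characters \<open>\<plusminus>pair b\<close> of \<open>T\<^sub>2\<close> both lie in the weight cone\<close>
  have "res_rat N2 (rat_vec b) \<in> res_rat N2 ` rat_cone ?P"
    unfolding cone[symmetric] by (rule res_rat_in_QHom[OF N2])
  then obtain p where p: "p \<in> rat_cone ?P" "res_rat N2 p = res_rat N2 (rat_vec b)"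
    by (rule imageE) (rule that, simp_all)
  have "res_rat N2 (- rat_vec b) \<in> res_rat N2 ` rat_cone ?P"
    unfolding cone[symmetric] by (rule res_rat_in_QHom[OF N2])
  then obtain q where q: "q \<in> rat_cone ?P" "res_rat N2 q = res_rat N2 (- rat_vec b)"
    by (rule imageE) (rule that, simp_all)
  have vanish_N1: "\<forall>x\<in>N1. qpair r x = 0" if "r \<in> rat_cone ?P" for r
    using that by (auto intro: qpair_rat_cone_eq_0[of r ?P] simp: resChar_eq_0_iff)
  have on_N2: "\<forall>x\<in>N2. qpair p x = of_int (pair b x)" "\<forall>x\<in>N2. qpair q x = - of_int (pair b x)"
    using res_rat_eqD[OF p(2)] res_rat_eqD[OF q(2)] by (simp_all add: qpair_minus_left)
  have "p + q = 0"
    using vanish_N1[OF p(1)] vanish_N1[OF q(1)] on_N2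
    by (intro qpair_eq_0_if_splitting[OF split]) (simp_all add: qpair_add_left)
  then have "p + q \<in> lineality (weights B)"
    using subspace_lineality[of "weights B"] by (simp add: vec.subspace_def)
  moreover have "rat_cone ?P \<subseteq> rat_cone (weights B)" by (rule rat_cone_mono) auto
  ultimately have "p \<in> lineality (weights B)"
    using p(1) q(1) rat_cone_add_in_lineality by blast
  then show ?thesis using that vanish_N1[OF p(1)] on_N2(1) by blast
qed

lemma hyperbolic_imp_perp_lineality_subset:
  assumes split: "lattice_splitting N1 N2"
    and hyp: "hyperbolic N2 (\<lambda>chi. Bres B N1 (\<lambda>_. 0) \<inter> Bres B N2 chi)"
  shows "perp (lineality_weights (weights B)) \<subseteq> N1"
proof
  fix n assume n: "n \<in> perp (lineality_weights (weights B))"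
  obtain a b where ab: "a \<in> N1" "b \<in> N2" "n = a + b"
    using split unfolding lattice_splitting_def by blast
  obtain p where p: "p \<in> lineality (weights B)" "\<forall>x\<in>N1. qpair p x = 0"
    "\<forall>x\<in>N2. qpair p x = of_int (pair b x)"
    using hyperbolic_lineality_lift[OF split hyp, of b] by blast
  have "qpair p n = 0" using p(1) n by (simp add: lineality_iff_perp)
  moreover have "qpair p n = of_int (pair b b)" using ab p(2,3) by (simp add: qpair_add_right)
  ultimately have "b = 0" using pair_self_eq_0 by simp
  then show "n \<in> N1" using ab by simp
qed

end

theorem mainTheorem2:
  fixes emb :: "complex \<Rightarrow> 'a::idom" and B :: "int^'k \<Rightarrow> 'a set"
  assumes "affine_T_variety emb B"
  shows "\<exists>N1. (\<exists>N2. lattice_splitting N1 N2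
            \<and> fix_pointed (Bres B N1)
            \<and> hyperbolic N2 (\<lambda>chi. Bres B N1 (\<lambda>_. 0) \<inter> Bres B N2 chi)
            \<and> Bres B N1 (\<lambda>_. 0) \<inter> Bres B N2 (\<lambda>_. 0) = B 0)
          \<and> (\<forall>N1' N2'. lattice_splitting N1' N2'
              \<and> fix_pointed (Bres B N1')
              \<and> hyperbolic N2' (\<lambda>chi. Bres B N1' (\<lambda>_. 0) \<inter> Bres B N2' chi)
              \<and> Bres B N1' (\<lambda>_. 0) \<inter> Bres B N2' (\<lambda>_. 0) = B 0
              \<longrightarrow> N1' = N1)"
proof -
  have grading: "M_grading emb B" using assms unfolding affine_T_variety_def by blast
  define N1 where "N1 = perp (lineality_weights (weights B))"
  obtain N2 where split: "lattice_splitting N1 N2"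
    using perp_lattice_splitting unfolding N1_def by blast
  show ?thesis
  proof (intro exI conjI allI impI)
    show "lattice_splitting N1 N2" by (fact split)
    show "fix_pointed (Bres B N1)"
      unfolding N1_def by (rule fix_pointed_perp_lineality[OF grading])
    show "hyperbolic N2 (\<lambda>chi. Bres B N1 (\<lambda>_. 0) \<inter> Bres B N2 chi)"
      using hyperbolic_perp_lineality[OF grading] split unfolding N1_def .
    show "Bres B N1 (\<lambda>_. 0) \<inter> Bres B N2 (\<lambda>_. 0) = B 0"
      by (rule Bres_Int_Bres_zero[OF grading split])
  next
    fix N1' N2'
    assume "lattice_splitting N1' N2' \<and> fix_pointed (Bres B N1')
      \<and> hyperbolic N2' (\<lambda>chi. Bres B N1' (\<lambda>_. 0) \<inter> Bres B N2' chi)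
      \<and> Bres B N1' (\<lambda>_. 0) \<inter> Bres B N2' (\<lambda>_. 0) = B 0"
    then show "N1' = N1"
      using fix_pointed_imp_subset_perp_lineality[OF grading, of N1']
        hyperbolic_imp_perp_lineality_subset[OF grading, of N1' N2']
      unfolding N1_def by blast
  qed
qed

end
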